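(* If the function $\dot f^{-1}$ is strictly positive (that is, $\dot f^{-1}:\mathbb{R}\to(0,\infty)$), then $\mathcal{A}_{Q,z}=(0,\infty)$.
   Context: Setting. - $\mathcal{M}\subseteq\mathbb{R}^d$; $h:\mathcal{M}\times\mathcal{X}\to\mathcal{Y}$; the loss $\ell:\mathcal{Y}\times\mathcal{Y}\to[0,\infty)$ satisfies $\ell(y,y)=0$. - For a dataset $z=((x_1,y_1),\dots,(x_n,y_n))$, $L_z(\theta)=\frac1n\sum_i\ell(h(\theta,x_i),y_i)$. - $Q$ is a Borel probability measure on $\mathcal{M}$. - $f:[0,\infty)\to\mathbb{R}$ is convex with $f(1)=0$, and is strictly convex and differentiable. - $\dot f$ is its derivative on $(0,\infty)$ and $\dot f^{-1}$ the inverse of $\dot f$. Admissible regularization factors. $\mathcal{A}_{Q,z}\subseteq(0,\infty)$ is the set of $\lambda>0$ for which there exists $\beta\in\mathbb{R}$ with $\dot f^{-1}\big(-\frac{\beta+L_z(\theta)}{\lambda}\big)>0$ for all $\theta\in\operatorname{supp}Q$ and $\int\dot f^{-1}\big(-\frac{\beta+L_z(\theta)}{\lambda}\big)dQ(\theta)=1$. *)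

theory Defs
  imports "HOL-Analysis.Analysis" "HOL-Probability.Probability"
begin

definition strictly_convex_on :: "real set \<Rightarrow> (real \<Rightarrow> real) \<Rightarrow> bool" where
  "strictly_convex_on S f \<longleftrightarrow>
     (\<forall>x\<in>S. \<forall>y\<in>S. x \<noteq> y \<longrightarrow>
        (\<forall>t::real. 0 < t \<and> t < 1 \<longrightarrow> f ((1 - t) * x + t * y) < (1 - t) * f x + t * f y))"

definition emp_risk :: "('m \<Rightarrow> 'x \<Rightarrow> 'y) \<Rightarrow> ('y \<Rightarrow> 'y \<Rightarrow> real) \<Rightarrow> ('x \<times> 'y) list \<Rightarrow> 'm \<Rightarrow> real" where
  "emp_risk h loss z \<theta> =
     (\<Sum>i<length z. loss (h \<theta> (fst (z ! i))) (snd (z ! i))) / real (length z)"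

definition msupp :: "'a::topological_space measure \<Rightarrow> 'a set" where
  "msupp Q = {\<theta> \<in> space Q. \<forall>U. open U \<and> \<theta> \<in> U \<longrightarrow> emeasure Q (U \<inter> space Q) > 0}"

text \<open>Admissible regularization factors A_{Q,z}, with finv the inverse of the
  derivative of f, and L the empirical risk L_z.\<close>
definition admissible :: "(real \<Rightarrow> real) \<Rightarrow> 'a::topological_space measure \<Rightarrow> ('a \<Rightarrow> real) \<Rightarrow> real set" where
  "admissible finv Q L =
     {r. r > 0 \<and> (\<exists>\<beta>::real.
        (\<forall>\<theta>\<in>msupp Q. finv (- (\<beta> + L \<theta>) / r) > 0) \<and>
        integrable Q (\<lambda>\<theta>. finv (- (\<beta> + L \<theta>) / r)) \<and>
        (\<integral>\<theta>. finv (- (\<beta> + L \<theta>) / r) \<partial>Q) = 1)}"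

end

theory Submission
  imports Defs
begin

text \<open>
  Since \<open>f\<close> is convex, \<open>fdot\<close> is nondecreasing on \<open>(0,\<infinity>)\<close>, so its inverse \<open>finv\<close> is a
  nondecreasing map of \<open>\<real>\<close> onto \<open>(0,\<infinity>)\<close>, hence continuous. As \<open>L\<^sub>z \<ge> 0\<close>, for fixed
  \<open>\<lambda> > 0\<close> the integrand \<open>finv (c - L\<^sub>z / \<lambda>)\<close> is bounded by \<open>finv c\<close>, so
  \<open>c \<mapsto> \<integral> finv (c - L\<^sub>z / \<lambda>) dQ\<close> is continuous by dominated convergence. It is at most
  \<open>finv (fdot 1) = 1\<close> at \<open>c = fdot 1\<close>, and exceeds 1 for large \<open>c\<close> because
  \<open>finv (fdot 2) = 2\<close> and \<open>Q {L\<^sub>z \<le> x} \<rightarrow> 1\<close>. The intermediate value theorem yields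
  \<open>\<beta> = -\<lambda> c\<close>; positivity on the support is automatic since \<open>finv > 0\<close>. Strict convexity,
  \<open>f 1 = 0\<close>, \<open>loss y y = 0\<close> and the description of the \<open>\<sigma>\<close>-algebra of \<open>Q\<close> are not needed.
\<close>

lemma convex_on_derivative_mono:
  fixes f D :: "real \<Rightarrow> real"
  assumes convex: "convex_on A f" and "connected A"
    and deriv: "\<And>x. x \<in> interior A \<Longrightarrow> (f has_real_derivative D x) (at x)"
  shows "mono_on (interior A) D"
proof (rule mono_onI)
  fix a b assume ab: "a \<in> interior A" "b \<in> interior A" "a \<le> b"
  have tangent: "f y - f x \<ge> D x * (y - x)" if "x \<in> interior A" "y \<in> interior A" for x y
    using convex_on_imp_above_tangent[OF convex \<open>connected A\<close> that(1)] that interior_subset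
      has_field_derivative_at_within[OF deriv[OF that(1)]] by blast
  from tangent[of a b] tangent[of b a] ab have "(D a - D b) * (b - a) \<le> 0"
    by (simp add: algebra_simps)
  with ab show "D a \<le> D b"
    by (cases "a = b") (auto simp: mult_le_0_iff)
qed

lemma mono_right_inverse:
  fixes g :: "'a::linorder \<Rightarrow> 'b::linorder"
  assumes "mono_on S g" and "\<And>t. h t \<in> S" and "\<And>t. g (h t) = t"
  shows "mono h"
proof (rule monoI, rule ccontr)
  fix s t assume "s \<le> t" "\<not> h s \<le> h t"
  then have "g (h t) \<le> g (h s)"
    using assms(1,2) by (auto intro: mono_onD)
  with \<open>s \<le> t\<close> have "s = t" by (simp add: assms(3))
  with \<open>\<not> h s \<le> h t\<close> show False by simp
qed

lemma (in prob_space) tendsto_measure_le_at_top: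
  fixes X :: "'a \<Rightarrow> real"
  assumes "X \<in> borel_measurable M"
  shows "((\<lambda>x. measure M {\<omega> \<in> space M. X \<omega> \<le> x}) \<longlongrightarrow> 1) at_top"
proof -
  interpret D: real_distribution "distr M borel X"
    using assms by simp
  have "cdf (distr M borel X) = (\<lambda>x. measure M {\<omega> \<in> space M. X \<omega> \<le> x})"
    using assms by (auto simp: cdf_def measure_distr vimage_def Int_def conj_commute)
  with D.cdf_lim_at_top_prob show ?thesis by simp
qed

context prob_space
begin

context
  fixes \<phi> :: "real \<Rightarrow> real" and L :: "'a \<Rightarrow> real"
  assumes L_measurable: "L \<in> borel_measurable M" and L_nonneg: "\<And>\<omega>. 0 \<le> L \<omega>"
    and \<phi>_cont: "continuous_on UNIV \<phi>" and \<phi>_mono: "mono \<phi>" and \<phi>_nonneg: "\<And>t. 0 \<le> \<phi> t"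
begin

lemma borel_measurable_shift [measurable]: "(\<lambda>\<omega>. \<phi> (c - L \<omega>)) \<in> borel_measurable M"
  by (intro borel_measurable_continuous_on[OF \<phi>_cont] borel_measurable_diff borel_measurable_const
      L_measurable)

lemma shift_le_mono: "\<phi> (c - L \<omega>) \<le> \<phi> d" if "c \<le> d"
  using that L_nonneg[of \<omega>] by (intro monoD[OF \<phi>_mono]) simp

lemma integrable_shift: "integrable M (\<lambda>\<omega>. \<phi> (c - L \<omega>))"
  by (rule integrable_const_bound[where B = "\<phi> c"])
     (use shift_le_mono \<phi>_nonneg in auto)

lemma integral_shift_le: "expectation (\<lambda>\<omega>. \<phi> (c - L \<omega>)) \<le> \<phi> c"
proof -
  have "expectation (\<lambda>\<omega>. \<phi> (c - L \<omega>)) \<le> expectation (\<lambda>\<omega>. \<phi> c)"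
    by (intro integral_mono integrable_shift shift_le_mono) auto
  then show ?thesis by (simp add: prob_space)
qed

lemma continuous_on_integral_shift:
  "continuous_on {..d} (\<lambda>c. expectation (\<lambda>\<omega>. \<phi> (c - L \<omega>)))"
proof (rule continuous_on_sequentiallyI)
  fix u a assume u: "\<forall>n. u n \<in> {..d}" and "u \<longlonglongrightarrow> a"
  show "(\<lambda>n. expectation (\<lambda>\<omega>. \<phi> (u n - L \<omega>))) \<longlonglongrightarrow> expectation (\<lambda>\<omega>. \<phi> (a - L \<omega>))"
  proof (rule integral_dominated_convergence[where w = "\<lambda>_. \<phi> d"])
    show "AE \<omega> in M. (\<lambda>n. \<phi> (u n - L \<omega>)) \<longlonglongrightarrow> \<phi> (a - L \<omega>)"
      using \<phi>_cont \<open>u \<longlonglongrightarrow> a\<close>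
      by (intro AE_I2 isCont_tendsto_compose[where g = \<phi>] tendsto_intros)
         (auto simp: continuous_on_eq_continuous_at)
    show "AE \<omega> in M. norm (\<phi> (u n - L \<omega>)) \<le> \<phi> d" for n
      using u shift_le_mono \<phi>_nonneg by auto
  qed auto
qed

lemma integral_shift_ge:
  "\<phi> t * prob {\<omega> \<in> space M. L \<omega> \<le> x} \<le> expectation (\<lambda>\<omega>. \<phi> (t + x - L \<omega>))"
proof -
  let ?A = "{\<omega> \<in> space M. L \<omega> \<le> x}"
  have A: "?A \<in> events"
    using L_measurable by measurable
  have "\<phi> t * prob ?A = expectation (\<lambda>\<omega>. \<phi> t * indicator ?A \<omega>)"
    \<comment> \<open>the unqualified \<open>integral_indicator\<close> is the Henstock-Kurzweil lemma\<close>
    by (simp only: integral_mult_right_zero Bochner_Integration.integral_indicator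
        Int_absorb2 Collect_subset)
  also have "\<dots> \<le> expectation (\<lambda>\<omega>. \<phi> (t + x - L \<omega>))"
  proof (rule integral_mono[OF _ integrable_shift])
    show "integrable M (\<lambda>\<omega>. \<phi> t * indicator ?A \<omega>)"
      using A less_top[THEN iffD1, OF emeasure_finite[of ?A]]
      by (intro integrable_mult_right integrable_real_indicator) simp_all
    show "\<phi> t * indicator ?A \<omega> \<le> \<phi> (t + x - L \<omega>)" for \<omega>
    proof (cases "\<omega> \<in> ?A")
      case True
      then have "\<phi> t \<le> \<phi> (t + x - L \<omega>)"
        by (intro monoD[OF \<phi>_mono]) simp
      with True show ?thesis
        by simp
    qed (simp add: \<phi>_nonneg)
  qed
  finally show ?thesis .
qed

lemma ex_integral_shift_eq:
  assumes "\<phi> s \<le> y" and "y < \<phi> t"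
  shows "\<exists>c. expectation (\<lambda>\<omega>. \<phi> (c - L \<omega>)) = y"
proof -
  have "((\<lambda>x. \<phi> t * prob {\<omega> \<in> space M. L \<omega> \<le> x}) \<longlongrightarrow> \<phi> t) at_top"
    using tendsto_mult_left[OF tendsto_measure_le_at_top[OF L_measurable], of "\<phi> t"] by simp
  from order_tendstoD(1)[OF this \<open>y < \<phi> t\<close>]
  obtain x where "y < \<phi> t * prob {\<omega> \<in> space M. L \<omega> \<le> x}"
    by (auto simp: eventually_at_top_linorder)
  with integral_shift_ge[of t x] have upper: "y \<le> expectation (\<lambda>\<omega>. \<phi> (t + x - L \<omega>))"
    by linarith
  define l where "l = min s (t + x)"
  have "expectation (\<lambda>\<omega>. \<phi> (l - L \<omega>)) \<le> \<phi> s"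
    using integral_shift_le[of l] monoD[OF \<phi>_mono, of l s] by (simp add: l_def)
  with \<open>\<phi> s \<le> y\<close> have lower: "expectation (\<lambda>\<omega>. \<phi> (l - L \<omega>)) \<le> y"
    by simp
  have "continuous_on {l..t + x} (\<lambda>c. expectation (\<lambda>\<omega>. \<phi> (c - L \<omega>)))"
    by (rule continuous_on_subset[OF continuous_on_integral_shift]) auto
  from IVT'[OF lower upper _ this] show ?thesis
    by (auto simp: l_def)
qed

end

end

theorem lemma3:
  fixes M :: "(real ^ 'd) set"
    and h :: "real ^ 'd \<Rightarrow> 'x \<Rightarrow> 'y"
    and loss :: "'y \<Rightarrow> 'y \<Rightarrow> real"
    and z :: "('x \<times> 'y) list"
    and Q :: "(real ^ 'd) measure"
    and f fdot finv :: "real \<Rightarrow> real"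
  assumes loss_nonneg: "\<And>y y'. loss y y' \<ge> 0"
    and loss_refl: "\<And>y. loss y y = 0"
    and Q_prob: "prob_space Q"
    and Q_borel: "sets Q = sets (restrict_space borel M)"
    and L_meas: "emp_risk h loss z \<in> borel_measurable Q"
    and f_convex: "convex_on {0..} f"
    and f_one: "f 1 = 0"
    and f_strict: "strictly_convex_on {0..} f"
    and f_deriv: "\<And>x. x > 0 \<Longrightarrow> (f has_real_derivative fdot x) (at x)"
    and finv_inv1: "\<And>x. x > 0 \<Longrightarrow> finv (fdot x) = x"
    and finv_inv2: "\<And>t. fdot (finv t) = t"
    and finv_pos: "\<And>t. finv t > 0"
  shows "admissible finv Q (emp_risk h loss z) = {0<..}"
proof -
  interpret prob_space Q
    by (rule Q_prob)
  define L where "L = emp_risk h loss z"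
  have L_nonneg: "0 \<le> L \<theta>" for \<theta>
    unfolding L_def emp_risk_def by (intro divide_nonneg_nonneg sum_nonneg loss_nonneg) auto
  have mono_fdot: "mono_on {0<..} fdot"
    using convex_on_derivative_mono[OF f_convex] f_deriv by simp
  have finv_mono: "mono finv"
    by (rule mono_right_inverse[OF mono_fdot _ finv_inv2]) (simp add: finv_pos)
  have "range finv = {0<..}"
    using finv_pos by (auto simp: image_iff) (metis finv_inv1)
  then have finv_cont: "continuous_on UNIV finv"
    by (intro continuous_onI_mono) (simp_all add: monoD[OF finv_mono])
  have finv_nonneg: "0 \<le> finv t" for t
    using finv_pos[of t] by simp
  have "r \<in> admissible finv Q L" if "r > 0" for r
  proof -
    have scaled_risk: "(\<lambda>\<theta>. L \<theta> / r) \<in> borel_measurable Q" "\<And>\<theta>. 0 \<le> L \<theta> / r"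
      using L_meas L_nonneg \<open>r > 0\<close> by (simp_all add: L_def)
    have "finv (fdot 1) \<le> 1" "1 < finv (fdot 2)"
      by (simp_all add: finv_inv1)
    from ex_integral_shift_eq[OF scaled_risk finv_cont finv_mono finv_nonneg this]
    obtain c where c: "(\<integral>\<theta>. finv (c - L \<theta> / r) \<partial>Q) = 1"
      by blast
    have "- (- r * c + L \<theta>) / r = c - L \<theta> / r" for \<theta>
      using \<open>r > 0\<close> by (simp add: field_simps)
    with c integrable_shift[OF scaled_risk finv_cont finv_mono finv_nonneg] finv_pos \<open>r > 0\<close>
    show ?thesis
      unfolding admissible_def by (auto intro!: exI[of _ "- r * c"])
  qed
  moreover have "admissible finv Q L \<subseteq> {0<..}"
    unfolding admissible_def by auto
  ultimately show ?thesis
    unfolding L_def[symmetric] by auto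
qed

end
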